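(* Let $\mathcal{M}$ be a nonempty bounded convex subset of a normed space $\mathcal{E}$ and let $T\colon\mathcal{M}\to\mathcal{M}$ be a $\lambda$-contraction (i.e. $\|Tx-Ty\|\le\lambda\|x-y\|$ for all $x,y\in\mathcal{M}$) with $\lambda\in(0,1)$. Then there exists a sequence $(x_n)_{n\in\mathbb{N}}$ in $\mathcal{M}$ such that for all $n,m\in\mathbb{N}$, $$\|x_n-T(x_n)\|<\frac{1-\lambda}{n}(1+\operatorname{diam}\mathcal{M})\quad\text{and}\quad\|x_n-x_m\|\le\Big(\frac1n+\frac1m\Big)(1+\operatorname{diam}\mathcal{M}).$$ *)

theory Defs
  imports "HOL-Analysis.Analysis"
begin

end

theory Submission
  imports Defs
begin

text \<open>So \<open>x\<^sub>n = T^k\<^sub>n x\<^sub>0\<close> with \<open>\<lambda>^k\<^sub>n < (1 - \<lambda>)/n\<close> does the job.\<close>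

lemma funpow_in_invariant_set:
  assumes "f ` S \<subseteq> S" and "x \<in> S"
  shows "(f ^^ n) x \<in> S"
  using assms by (induction n) auto

lemma funpow_contraction_dist:
  fixes f :: "'a::metric_space \<Rightarrow> 'a"
  assumes inv: "f ` S \<subseteq> S"
    and contr: "\<And>x y. x \<in> S \<Longrightarrow> y \<in> S \<Longrightarrow> dist (f x) (f y) \<le> c * dist x y"
    and "0 \<le> c" and x: "x \<in> S" and y: "y \<in> S"
  shows "dist ((f ^^ n) x) ((f ^^ n) y) \<le> c ^ n * dist x y"
proof (induction n)
  case (Suc n)
  have "dist ((f ^^ Suc n) x) ((f ^^ Suc n) y) \<le> c * dist ((f ^^ n) x) ((f ^^ n) y)"
    using contr funpow_in_invariant_set[OF inv] x y by simp
  also have "\<dots> \<le> c * (c ^ n * dist x y)"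
    using Suc.IH \<open>0 \<le> c\<close> by (rule mult_left_mono)
  finally show ?case by simp
qed simp

lemma funpow_contraction_dist_iterates:
  fixes f :: "'a::metric_space \<Rightarrow> 'a"
  assumes inv: "f ` S \<subseteq> S"
    and contr: "\<And>x y. x \<in> S \<Longrightarrow> y \<in> S \<Longrightarrow> dist (f x) (f y) \<le> c * dist x y"
    and "0 \<le> c" and "bounded S" and x: "x \<in> S"
  shows "dist ((f ^^ j) x) ((f ^^ k) x) \<le> c ^ min j k * diameter S"
proof -
  have le: "dist ((f ^^ j) x) ((f ^^ (j + d)) x) \<le> c ^ j * diameter S" for j d
  proof -
    have fd: "(f ^^ d) x \<in> S"
      using funpow_in_invariant_set[OF inv x] .
    have "dist ((f ^^ j) x) ((f ^^ (j + d)) x) = dist ((f ^^ j) x) ((f ^^ j) ((f ^^ d) x))"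
      by (simp add: funpow_add)
    also have "\<dots> \<le> c ^ j * dist x ((f ^^ d) x)"
      using funpow_contraction_dist[OF inv contr \<open>0 \<le> c\<close> x fd] .
    also have "\<dots> \<le> c ^ j * diameter S"
      using diameter_bounded_bound[OF \<open>bounded S\<close> x fd] \<open>0 \<le> c\<close> by (simp add: mult_left_mono)
    finally show ?thesis .
  qed
  show ?thesis
  proof (cases "j \<le> k")
    case True
    then show ?thesis
      using le[of j "k - j"] by (simp add: min_def)
  next
    case False
    then show ?thesis
      using le[of k "j - k"] by (simp add: min_def dist_commute)
  qed
qed

lemma bounded_contraction_approximate_fixed_point_seq:
  fixes f :: "'a::metric_space \<Rightarrow> 'a"
  assumes "S \<noteq> {}" and "bounded S" and inv: "f ` S \<subseteq> S"
    and contr: "\<And>x y. x \<in> S \<Longrightarrow> y \<in> S \<Longrightarrow> dist (f x) (f y) \<le> c * dist x y"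
    and "0 \<le> c" and "c < 1"
  shows "\<exists>x. (\<forall>n. x n \<in> S) \<and>
     (\<forall>n\<ge>1. dist (x n) (f (x n)) < (1 - c) / real n * (1 + diameter S)) \<and>
     (\<forall>n\<ge>1. \<forall>m\<ge>1. dist (x n) (x m) \<le> (1 / real n + 1 / real m) * (1 + diameter S))"
proof -
  obtain x0 where x0: "x0 \<in> S"
    using \<open>S \<noteq> {}\<close> by blast
  define D where "D = diameter S"
  have "0 \<le> D"
    unfolding D_def using \<open>bounded S\<close> by (rule diameter_ge_0)
  have iterates: "dist ((f ^^ j) x0) ((f ^^ k) x0) \<le> c ^ min j k * D" for j k
    unfolding D_def using inv contr \<open>0 \<le> c\<close> \<open>bounded S\<close> x0
    by (rule funpow_contraction_dist_iterates)
  have "\<forall>n. \<exists>k. 1 \<le> n \<longrightarrow> c ^ k < (1 - c) / real n"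
    using real_arch_pow_inv \<open>c < 1\<close> by simp
  then obtain k where k: "\<And>n. 1 \<le> n \<Longrightarrow> c ^ k n < (1 - c) / real n"
    by metis
  have k_le: "c ^ k n * D \<le> 1 / real n * (1 + D)" if "1 \<le> n" for n
  proof -
    have "(1 - c) / real n \<le> 1 / real n"
      using \<open>0 \<le> c\<close> by (simp add: divide_right_mono)
    then have "c ^ k n \<le> 1 / real n"
      using k[OF that] by linarith
    then show ?thesis
      using \<open>0 \<le> D\<close> \<open>0 \<le> c\<close> by (intro mult_mono) auto
  qed
  define x where "x n = (f ^^ k n) x0" for n
  show ?thesis
  proof (intro exI[of _ x] conjI allI impI)
    show "x n \<in> S" for n
      unfolding x_def using inv x0 by (rule funpow_in_invariant_set)
  next
    fix n :: nat
    assume "1 \<le> n"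
    have "dist (x n) (f (x n)) \<le> c ^ k n * D"
      using iterates[of "k n" "Suc (k n)"] by (simp add: x_def)
    also have "\<dots> < (1 - c) / real n * (1 + D)"
      using k[OF \<open>1 \<le> n\<close>] \<open>0 \<le> D\<close> \<open>1 \<le> n\<close> \<open>c < 1\<close> by (intro mult_strict_mono) auto
    finally show "dist (x n) (f (x n)) < (1 - c) / real n * (1 + diameter S)"
      by (simp add: D_def)
  next
    fix n m :: nat
    assume "1 \<le> n" "1 \<le> m"
    have "dist (x n) (x m) \<le> c ^ min (k n) (k m) * D"
      using iterates by (simp add: x_def)
    also have "\<dots> \<le> c ^ k n * D + c ^ k m * D"
      using \<open>0 \<le> D\<close> \<open>0 \<le> c\<close> by (simp add: min_def)
    also have "\<dots> \<le> (1 / real n + 1 / real m) * (1 + D)"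
      using k_le[OF \<open>1 \<le> n\<close>] k_le[OF \<open>1 \<le> m\<close>] by (simp add: distrib_right)
    finally show "dist (x n) (x m) \<le> (1 / real n + 1 / real m) * (1 + diameter S)"
      by (simp add: D_def)
  qed
qed

theorem lemma3p4:
  fixes M :: "'a::real_normed_vector set"
    and T :: "'a \<Rightarrow> 'a"
    and lam :: real
  assumes "M \<noteq> {}" and "bounded M" and "convex M"
    and "T ` M \<subseteq> M"
    and "\<And>x y. x \<in> M \<Longrightarrow> y \<in> M \<Longrightarrow> norm (T x - T y) \<le> lam * norm (x - y)"
    and "0 < lam" and "lam < 1"
  shows "\<exists>x :: nat \<Rightarrow> 'a. (\<forall>n. x n \<in> M) \<and>
     (\<forall>n\<ge>1. norm (x n - T (x n)) < (1 - lam) / real n * (1 + diameter M)) \<and>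
     (\<forall>n\<ge>1. \<forall>m\<ge>1. norm (x n - x m) \<le> (1 / real n + 1 / real m) * (1 + diameter M))"
proof -
  have "\<exists>x. (\<forall>n. x n \<in> M) \<and>
     (\<forall>n\<ge>1. dist (x n) (T (x n)) < (1 - lam) / real n * (1 + diameter M)) \<and>
     (\<forall>n\<ge>1. \<forall>m\<ge>1. dist (x n) (x m) \<le> (1 / real n + 1 / real m) * (1 + diameter M))"
    using assms(1,2,4) assms(5)[unfolded dist_norm[symmetric]] assms(6,7)
    by (intro bounded_contraction_approximate_fixed_point_seq) auto
  then show ?thesis
    by (simp add: dist_norm)
qed

end
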